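(* Let $A,B$ be idempotent $\Gamma$-graded rings and ${}_AP_B$, ${}_BQ_A$ graded bimodules unital on both sides, such that there is a graded Morita context $(A,B,P,Q,\mu,\nu)$ with surjective trace maps. Let ${}_AK$ and ${}_BL$ be unital torsion-free graded modules. Then: (1) The map $\varphi:P\otimes_B B\cdot\mathrm{HOM}_A(P,K)\to A\cdot\mathrm{HOM}_A(A,K)$ given by $\varphi(p\otimes f)(x)=f(xp)=xf(p)$ ($p\in P$, $f\in B\cdot\mathrm{HOM}_A(P,K)$, $x\in A$) is a graded epimorphism of degree $e$ of graded left $A$-modules with torsion kernel. (2) The map $\gamma:B\otimes_BL\to B\cdot\mathrm{HOM}_A(P,P\otimes_BL)$ given by $\gamma(b\otimes l)(p)=pb\otimes l$ is a graded epimorphism of degree $e$ of graded left $B$-modules with torsion kernel.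
   Context: $\Gamma$ is a fixed multiplicative group with identity $e$. Rings are associative $\Gamma$-graded, not necessarily unital; $A$ is idempotent if $A^2=A$. A graded left module is unital if $AM=M$, torsion-free if $Am=0\Rightarrow m=0$; a module has torsion kernel if every element $k$ of the kernel satisfies $Ak=0$ (for $B$-modules: $Bk=0$). A left-linear $f$ is graded of degree $\sigma$ if $f(M_\tau)\subseteq N_{\tau\sigma}$; $\mathrm{HOM}$ is the direct sum over degrees. For ${}_RM_S$ and a graded left $R$-module $N$, $\mathrm{HOM}_R(M,N)$ is a graded left $S$-module via $(sf)(m)=f(ms)$; $S\cdot H$ denotes finite sums $\sum s_ih_i$. (In particular $\mathrm{HOM}_A(A,K)$ is a left $A$-module via $(af)(x)=f(xa)$.) A graded Morita context $(A,B,P,Q,\mu,\nu)$: idempotent graded rings $A,B$, graded bimodules ${}_AP_B$, ${}_BQ_A$ unital on both sides, degree-$e$ graded bimodule maps $\mu:P\otimes_BQ\to A$, $\langle p,q\rangle=\mu(p\otimes q)$, $\nu:Q\otimes_AP\to B$, $[q,p]=\nu(q\otimes p)$, with $p'[q,p]=\langle p',q\rangle p$ and $q'\langle p,q\rangle=[q',p]q$. *)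

theory Defs
  imports Main "HOL-Library.Function_Algebras"
begin

text \<open>The multiplicative grading group Gamma, with identity 1 (playing the role of e).\<close>
class mult_group = monoid_mult +
  assumes mult_group_inverse_ex: "\<exists>b. b * a = 1"

definition grading :: "'m::ab_group_add set \<Rightarrow> ('g \<Rightarrow> 'm set) \<Rightarrow> bool" where
  "grading M D \<longleftrightarrow>
     (\<forall>s. 0 \<in> D s \<and> D s \<subseteq> M \<and> (\<forall>x\<in>D s. \<forall>y\<in>D s. x - y \<in> D s)) \<and>
     (\<forall>m\<in>M. \<exists>!c. finite {s. c s \<noteq> 0} \<and> (\<forall>s. c s \<in> D s) \<and>
                   m = (\<Sum>s\<in>{s. c s \<noteq> 0}. c s))"

text \<open>A Gamma-graded (associative, not necessarily unital) ring: the whole type 'a.\<close>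
definition graded_ring :: "('g::mult_group \<Rightarrow> 'a::ring set) \<Rightarrow> bool" where
  "graded_ring gA \<longleftrightarrow> grading UNIV gA \<and>
     (\<forall>s t. \<forall>x\<in>gA s. \<forall>y\<in>gA t. x * y \<in> gA (s * t))"

definition idempotent_ring :: "'a::ring itself \<Rightarrow> bool" where
  "idempotent_ring _ \<longleftrightarrow> (\<forall>a::'a. \<exists>xs. a = sum_list (map (\<lambda>(x,y). x * y) xs))"

definition graded_lmod ::
  "('g::mult_group \<Rightarrow> 'a::ring set) \<Rightarrow> ('g \<Rightarrow> 'm::ab_group_add set) \<Rightarrow> ('a \<Rightarrow> 'm \<Rightarrow> 'm) \<Rightarrow> bool" where
  "graded_lmod gA gM act \<longleftrightarrow> grading UNIV gM \<and>
     (\<forall>a b m. act (a + b) m = act a m + act b m) \<and>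
     (\<forall>a m n. act a (m + n) = act a m + act a n) \<and>
     (\<forall>a b m. act (a * b) m = act a (act b m)) \<and>
     (\<forall>s t. \<forall>a\<in>gA s. \<forall>m\<in>gM t. act a m \<in> gM (s * t))"

definition graded_rmod ::
  "('g::mult_group \<Rightarrow> 'b::ring set) \<Rightarrow> ('g \<Rightarrow> 'm::ab_group_add set) \<Rightarrow> ('m \<Rightarrow> 'b \<Rightarrow> 'm) \<Rightarrow> bool" where
  "graded_rmod gB gM rac \<longleftrightarrow> grading UNIV gM \<and>
     (\<forall>m a b. rac m (a + b) = rac m a + rac m b) \<and>
     (\<forall>m n a. rac (m + n) a = rac m a + rac n a) \<and>
     (\<forall>m a b. rac m (a * b) = rac (rac m a) b) \<and>
     (\<forall>s t. \<forall>m\<in>gM s. \<forall>b\<in>gB t. rac m b \<in> gM (s * t))"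

definition bimod_compat :: "('a \<Rightarrow> 'm \<Rightarrow> 'm) \<Rightarrow> ('m \<Rightarrow> 'b \<Rightarrow> 'm) \<Rightarrow> bool" where
  "bimod_compat act rac \<longleftrightarrow> (\<forall>a m b. act a (rac m b) = rac (act a m) b)"

definition lunital :: "('a \<Rightarrow> 'm::ab_group_add \<Rightarrow> 'm) \<Rightarrow> bool" where
  "lunital act \<longleftrightarrow> (\<forall>m. \<exists>xs. m = sum_list (map (\<lambda>(a,n). act a n) xs))"

definition runital :: "('m::ab_group_add \<Rightarrow> 'b \<Rightarrow> 'm) \<Rightarrow> bool" where
  "runital rac \<longleftrightarrow> (\<forall>m. \<exists>xs. m = sum_list (map (\<lambda>(n,b). rac n b) xs))"

definition torsion_free :: "('a \<Rightarrow> 'm::ab_group_add \<Rightarrow> 'm) \<Rightarrow> bool" where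
  "torsion_free act \<longleftrightarrow> (\<forall>m. (\<forall>a. act a m = 0) \<longrightarrow> m = 0)"

text \<open>The degree-e bimodule maps mu : P (x)_B Q -> A and nu : Q (x)_A P -> B are given,
  by the universal property of the tensor product, as balanced biadditive maps.\<close>
definition graded_morita_context ::
  "('g::mult_group \<Rightarrow> 'a::ring set) \<Rightarrow> ('g \<Rightarrow> 'b::ring set) \<Rightarrow>
   ('g \<Rightarrow> 'p::ab_group_add set) \<Rightarrow> ('g \<Rightarrow> 'q::ab_group_add set) \<Rightarrow>
   ('a \<Rightarrow> 'p \<Rightarrow> 'p) \<Rightarrow> ('p \<Rightarrow> 'b \<Rightarrow> 'p) \<Rightarrow> ('b \<Rightarrow> 'q \<Rightarrow> 'q) \<Rightarrow> ('q \<Rightarrow> 'a \<Rightarrow> 'q) \<Rightarrow>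
   ('p \<Rightarrow> 'q \<Rightarrow> 'a) \<Rightarrow> ('q \<Rightarrow> 'p \<Rightarrow> 'b) \<Rightarrow> bool" where
  "graded_morita_context gA gB gP gQ lP rP lQ rQ mu nu \<longleftrightarrow>
     graded_ring gA \<and> graded_ring gB \<and>
     idempotent_ring TYPE('a) \<and> idempotent_ring TYPE('b) \<and>
     graded_lmod gA gP lP \<and> graded_rmod gB gP rP \<and> bimod_compat lP rP \<and>
     lunital lP \<and> runital rP \<and>
     graded_lmod gB gQ lQ \<and> graded_rmod gA gQ rQ \<and> bimod_compat lQ rQ \<and>
     lunital lQ \<and> runital rQ \<and>
     \<comment> \<open>mu : P (x)_B Q -> A, graded A-A-bimodule map of degree e\<close>
     (\<forall>p p' q. mu (p + p') q = mu p q + mu p' q) \<and>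
     (\<forall>p q q'. mu p (q + q') = mu p q + mu p q') \<and>
     (\<forall>p b q. mu (rP p b) q = mu p (lQ b q)) \<and>
     (\<forall>a p q. mu (lP a p) q = a * mu p q) \<and>
     (\<forall>p q a. mu p (rQ q a) = mu p q * a) \<and>
     (\<forall>s t. \<forall>p\<in>gP s. \<forall>q\<in>gQ t. mu p q \<in> gA (s * t)) \<and>
     \<comment> \<open>nu : Q (x)_A P -> B, graded B-B-bimodule map of degree e\<close>
     (\<forall>q q' p. nu (q + q') p = nu q p + nu q' p) \<and>
     (\<forall>q p p'. nu q (p + p') = nu q p + nu q p') \<and>
     (\<forall>q a p. nu (rQ q a) p = nu q (lP a p)) \<and>
     (\<forall>b q p. nu (lQ b q) p = b * nu q p) \<and>
     (\<forall>q p b. nu q (rP p b) = nu q p * b) \<and>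
     (\<forall>s t. \<forall>q\<in>gQ s. \<forall>p\<in>gP t. nu q p \<in> gB (s * t)) \<and>
     \<comment> \<open>associativity conditions\<close>
     (\<forall>p' q p. rP p' (nu q p) = lP (mu p' q) p) \<and>
     (\<forall>q' p q. rQ q' (mu p q) = lQ (nu q' p) q)"

definition surjective_traces :: "('p \<Rightarrow> 'q \<Rightarrow> 'a::ring) \<Rightarrow> ('q \<Rightarrow> 'p \<Rightarrow> 'b::ring) \<Rightarrow> bool" where
  "surjective_traces mu nu \<longleftrightarrow>
     (\<forall>a. \<exists>xs. a = sum_list (map (\<lambda>(p,q). mu p q) xs)) \<and>
     (\<forall>b. \<exists>xs. b = sum_list (map (\<lambda>(q,p). nu q p) xs))"

definition hom_deg ::
  "('g::mult_group \<Rightarrow> 'm::ab_group_add set) \<Rightarrow> ('g \<Rightarrow> 'n::ab_group_add set) \<Rightarrow>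
   ('a \<Rightarrow> 'm \<Rightarrow> 'm) \<Rightarrow> ('a \<Rightarrow> 'n \<Rightarrow> 'n) \<Rightarrow> 'g \<Rightarrow> ('m \<Rightarrow> 'n) set" where
  "hom_deg gM gN actM actN s =
     {f. (\<forall>x y. f (x + y) = f x + f y) \<and> (\<forall>a x. f (actM a x) = actN a (f x)) \<and>
         (\<forall>t. \<forall>x\<in>gM t. f x \<in> gN (t * s))}"

definition HOM ::
  "('g::mult_group \<Rightarrow> 'm::ab_group_add set) \<Rightarrow> ('g \<Rightarrow> 'n::ab_group_add set) \<Rightarrow>
   ('a \<Rightarrow> 'm \<Rightarrow> 'm) \<Rightarrow> ('a \<Rightarrow> 'n \<Rightarrow> 'n) \<Rightarrow> ('m \<Rightarrow> 'n) set" where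
  "HOM gM gN actM actN =
     {f. \<exists>S c. finite S \<and> (\<forall>s\<in>S. c s \<in> hom_deg gM gN actM actN s) \<and> f = (\<Sum>s\<in>S. c s)}"

definition hom_act :: "('m \<Rightarrow> 's \<Rightarrow> 'm) \<Rightarrow> 's \<Rightarrow> ('m \<Rightarrow> 'n) \<Rightarrow> ('m \<Rightarrow> 'n)" where
  "hom_act rac s f = (\<lambda>m. f (rac m s))"

text \<open>S . H : finite sums of elements s h with s in S (the whole ring) and h in H.\<close>
definition span_act :: "('s \<Rightarrow> 'h \<Rightarrow> 'h::ab_group_add) \<Rightarrow> 'h set \<Rightarrow> 'h set" where
  "span_act act H = {sum_list (map (\<lambda>(s,h). act s h) xs) | xs. \<forall>z\<in>set xs. snd z \<in> H}"

definition zsmul :: "int \<Rightarrow> 'm::ab_group_add \<Rightarrow> 'm" where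
  "zsmul n v = (if 0 \<le> n then (\<Sum>_<nat n. v) else - (\<Sum>_<nat (- n). v))"

text \<open>Free abelian group on a set S: finitely supported integer-valued functions on S.\<close>
definition free_on :: "'z set \<Rightarrow> ('z \<Rightarrow> int) set" where
  "free_on S = {x. finite {z. x z \<noteq> 0} \<and> {z. x z \<noteq> 0} \<subseteq> S}"

definition delta :: "'z \<Rightarrow> 'z \<Rightarrow> int" where
  "delta z = (\<lambda>w. if w = z then 1 else 0)"

inductive_set tensor_rels ::
  "'x::ab_group_add set \<Rightarrow> 'y::ab_group_add set \<Rightarrow> ('x \<Rightarrow> 'r \<Rightarrow> 'x) \<Rightarrow> ('r \<Rightarrow> 'y \<Rightarrow> 'y) \<Rightarrow>
   ('x \<times> 'y \<Rightarrow> int) set"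
  for X1 X2 rac lac where
  rel_zero: "0 \<in> tensor_rels X1 X2 rac lac"
| rel_add1: "\<lbrakk>u \<in> X1; u' \<in> X1; y \<in> X2\<rbrakk> \<Longrightarrow>
     delta (u + u', y) - delta (u, y) - delta (u', y) \<in> tensor_rels X1 X2 rac lac"
| rel_add2: "\<lbrakk>u \<in> X1; y \<in> X2; y' \<in> X2\<rbrakk> \<Longrightarrow>
     delta (u, y + y') - delta (u, y) - delta (u, y') \<in> tensor_rels X1 X2 rac lac"
| rel_bal: "\<lbrakk>u \<in> X1; y \<in> X2; rac u r \<in> X1; lac r y \<in> X2\<rbrakk> \<Longrightarrow>
     delta (rac u r, y) - delta (u, lac r y) \<in> tensor_rels X1 X2 rac lac"
| rel_diff: "\<lbrakk>x \<in> tensor_rels X1 X2 rac lac; x' \<in> tensor_rels X1 X2 rac lac\<rbrakk> \<Longrightarrow>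
     x - x' \<in> tensor_rels X1 X2 rac lac"

definition zlift :: "('x \<Rightarrow> 'y \<Rightarrow> 't::ab_group_add) \<Rightarrow> ('x \<times> 'y \<Rightarrow> int) \<Rightarrow> 't" where
  "zlift tp x = (\<Sum>z\<in>{z. x z \<noteq> 0}. zsmul (x z) (tp (fst z) (snd z)))"

text \<open>(T, tp) is a tensor product X1 (x)_R X2: the type 't is (via tp) the free abelian group on
  X1 x X2 modulo the defining relations, i.e. tp is biadditive and balanced, its values
  generate 't, and the induced map free_on (X1 x X2) -> 't has kernel exactly tensor_rels.\<close>
definition is_tensor ::
  "'x::ab_group_add set \<Rightarrow> 'y::ab_group_add set \<Rightarrow> ('x \<Rightarrow> 'r \<Rightarrow> 'x) \<Rightarrow> ('r \<Rightarrow> 'y \<Rightarrow> 'y) \<Rightarrow>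
   ('x \<Rightarrow> 'y \<Rightarrow> 't::ab_group_add) \<Rightarrow> bool" where
  "is_tensor X1 X2 rac lac tp \<longleftrightarrow>
     (\<forall>u\<in>X1. \<forall>u'\<in>X1. \<forall>y\<in>X2. tp (u + u') y = tp u y + tp u' y) \<and>
     (\<forall>u\<in>X1. \<forall>y\<in>X2. \<forall>y'\<in>X2. tp u (y + y') = tp u y + tp u y') \<and>
     (\<forall>u\<in>X1. \<forall>y\<in>X2. \<forall>r. rac u r \<in> X1 \<and> lac r y \<in> X2 \<longrightarrow> tp (rac u r) y = tp u (lac r y)) \<and>
     (\<forall>t. \<exists>xs. set xs \<subseteq> X1 \<times> X2 \<and> t = sum_list (map (\<lambda>(u,y). tp u y) xs)) \<and>
     (\<forall>x\<in>free_on (X1 \<times> X2). zlift tp x = 0 \<longleftrightarrow> x \<in> tensor_rels X1 X2 rac lac)"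

definition tensor_grading ::
  "('g::mult_group \<Rightarrow> 'x set) \<Rightarrow> ('g \<Rightarrow> 'y set) \<Rightarrow> ('x \<Rightarrow> 'y \<Rightarrow> 't::ab_group_add) \<Rightarrow> 'g \<Rightarrow> 't set" where
  "tensor_grading g1 g2 tp s =
     {sum_list (map (\<lambda>(u,y). tp u y) xs) | xs.
        \<forall>z\<in>set xs. \<exists>a b. fst z \<in> g1 a \<and> snd z \<in> g2 b \<and> a * b = s}"

end

theory Submission
  imports Defs "HOL.Modules"
begin

text \<open>Both maps are induced, via the universal property of the tensor product, by balanced
  maps, and additivity, linearity and preservation of degrees are checked on generators.
  Surjectivity and the torsion kernel come from the surjective traces. For part (1): if h is in
  HOM(A,K) then mu(p,q) h = phi (p \<otimes> h(mu(-,q))), and mu(p,q) t = p \<otimes> phi(t)(mu(-,q)) for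
  every t, so phi t = 0 forces A t = 0. For part (2): with nu_q : P \<otimes> L \<rightarrow> B \<otimes> L,
  p \<otimes> l \<mapsto> nu(q,p) \<otimes> l, one has nu(q,p) h = gamma (nu_q (h p)) and
  nu_q (gamma t p) = nu(q,p) t.\<close>

lemma (in additive) sum_list: "f (sum_list xs) = sum_list (map f xs)"
  by (induction xs) (simp_all add: zero add)

lemma additive_id: "additive (\<lambda>x. x)"
  by (simp add: additive_def)

definition add_closed :: "'a::ab_group_add set \<Rightarrow> bool" where
  "add_closed C \<longleftrightarrow> 0 \<in> C \<and> (\<forall>x\<in>C. \<forall>y\<in>C. x + y \<in> C)"

lemma add_closedI: "0 \<in> C \<Longrightarrow> (\<And>x y. x \<in> C \<Longrightarrow> y \<in> C \<Longrightarrow> x + y \<in> C) \<Longrightarrow> add_closed C"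
  unfolding add_closed_def by blast

lemma add_closed_zero: "add_closed C \<Longrightarrow> 0 \<in> C"
  unfolding add_closed_def by blast

lemma add_closed_add: "add_closed C \<Longrightarrow> x \<in> C \<Longrightarrow> y \<in> C \<Longrightarrow> x + y \<in> C"
  unfolding add_closed_def by blast

lemma add_closed_zero_set: "add_closed {0}"
  by (simp add: add_closed_def)

lemma add_closed_sum: "add_closed C \<Longrightarrow> (\<And>s. s \<in> S \<Longrightarrow> g s \<in> C) \<Longrightarrow> sum g S \<in> C"
  by (induction S rule: infinite_finite_induct) (auto simp: add_closed_def)

lemma add_closed_sum_list:
  "add_closed C \<Longrightarrow> (\<And>z. z \<in> set xs \<Longrightarrow> g z \<in> C) \<Longrightarrow> sum_list (map g xs) \<in> C"
  by (induction xs) (auto simp: add_closed_def)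

lemma add_closed_Int: "add_closed C \<Longrightarrow> add_closed D \<Longrightarrow> add_closed (C \<inter> D)"
  unfolding add_closed_def by blast

lemma add_closed_range:
  assumes "additive f" shows "add_closed (range f)"
proof (rule add_closedI)
  show "0 \<in> range f" using additive.zero[OF assms] by (metis rangeI)
  fix x y assume "x \<in> range f" "y \<in> range f"
  then obtain u v where "x = f u" "y = f v" by blast
  then show "x + y \<in> range f" using additive.add[OF assms, of u v] by (metis rangeI)
qed

lemma additive_mem_sum_list:
  assumes "additive f" "add_closed C" "\<And>u v. f (g u v) \<in> C"
  shows "f (sum_list (map (\<lambda>(u, v). g u v) xs)) \<in> C"
  unfolding additive.sum_list[OF assms(1)] map_map
  by (rule add_closed_sum_list[OF assms(2)]) (auto simp: assms(3))

lemma lunital_induct: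
  assumes "lunital act" "additive f" "add_closed C" "\<And>a n. f (act a n) \<in> C"
  shows "f m \<in> C"
proof -
  obtain xs where "m = sum_list (map (\<lambda>(a, n). act a n) xs)"
    using assms(1) unfolding lunital_def by blast
  then show ?thesis
    using additive_mem_sum_list[OF assms(2,3) assms(4)] by simp
qed

lemma grading_add_closed: "grading M D \<Longrightarrow> add_closed (D s)"
  unfolding grading_def add_closed_def by (metis diff_0 diff_minus_eq_add)

lemma grading_induct:
  assumes "grading UNIV D" "additive f" "add_closed C" "\<And>s x. x \<in> D s \<Longrightarrow> f x \<in> C"
  shows "f x \<in> C"
proof -
  obtain c where "\<forall>s. c s \<in> D s" "x = (\<Sum>s\<in>{s. c s \<noteq> 0}. c s)"
    using assms(1) unfolding grading_def by blast
  then have "f x = (\<Sum>s\<in>{s. c s \<noteq> 0}. f (c s))"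
    using assms(2) by (simp add: additive.sum)
  also have "\<dots> \<in> C"
    by (rule add_closed_sum[OF assms(3)]) (use assms(4) \<open>\<forall>s. c s \<in> D s\<close> in blast)
  finally show ?thesis .
qed

lemma graded_lmodD:
  assumes "graded_lmod gA gM act"
  shows "grading UNIV gM" "act (a + b) m = act a m + act b m" "act a (m + n) = act a m + act a n"
    "act (a * b) m = act a (act b m)" "a \<in> gA s \<Longrightarrow> m \<in> gM t \<Longrightarrow> act a m \<in> gM (s * t)"
  using assms unfolding graded_lmod_def by blast+

lemma graded_rmodD:
  assumes "graded_rmod gB gM rac"
  shows "grading UNIV gM" "rac m (a + b) = rac m a + rac m b" "rac (m + n) a = rac m a + rac n a"
    "rac m (a * b) = rac (rac m a) b" "m \<in> gM s \<Longrightarrow> b \<in> gB t \<Longrightarrow> rac m b \<in> gM (s * t)"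
  using assms unfolding graded_rmod_def by blast+

lemma span_act_add_closed: "add_closed (span_act act H)"
proof (rule add_closedI)
  show "0 \<in> span_act act H"
    unfolding span_act_def by (intro CollectI exI[of _ "[]"]) auto
next
  fix x y assume "x \<in> span_act act H" "y \<in> span_act act H"
  then obtain xs ys where "x = sum_list (map (\<lambda>(s,h). act s h) xs)" "\<forall>z\<in>set xs. snd z \<in> H"
    "y = sum_list (map (\<lambda>(s,h). act s h) ys)" "\<forall>z\<in>set ys. snd z \<in> H"
    unfolding span_act_def by blast
  then show "x + y \<in> span_act act H"
    unfolding span_act_def by (intro CollectI exI[of _ "xs @ ys"]) auto
qed

lemma span_act_gen: "h \<in> H \<Longrightarrow> act s h \<in> span_act act H"
  unfolding span_act_def by (intro CollectI exI[of _ "[(s, h)]"]) auto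

lemma span_act_subset:
  assumes "add_closed C" "\<And>s h. h \<in> H \<Longrightarrow> act s h \<in> C"
  shows "span_act act H \<subseteq> C"
  using assms unfolding span_act_def by (auto intro!: add_closed_sum_list)

lemma span_act_act:
  assumes "f \<in> span_act act H" "\<And>s s' h. act s (act s' h) = act (s * s') h" "additive (act s)"
  shows "act s f \<in> span_act act H"
proof -
  have "span_act act H \<subseteq> {f. act s f \<in> span_act act H}"
  proof (rule span_act_subset)
    show "add_closed {f. act s f \<in> span_act act H}"
      using span_act_add_closed[of act H] additive.zero[OF assms(3)] additive.add[OF assms(3)]
      by (simp add: add_closed_def)
  qed (simp add: assms(2) span_act_gen)
  then show ?thesis using assms(1) by blast
qed

section \<open>Graded homomorphisms\<close>

lemma add_closed_additive: "add_closed (Collect additive)"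
  by (rule add_closedI) (simp_all add: additive_def)

lemma hom_degI:
  assumes "additive f" "\<And>a x. f (actM a x) = actN a (f x)"
    "\<And>t x. x \<in> gM t \<Longrightarrow> f x \<in> gN (t * s)"
  shows "f \<in> hom_deg gM gN actM actN s"
  using assms unfolding hom_deg_def additive_def by blast

lemma
  assumes "f \<in> hom_deg gM gN actM actN s"
  shows hom_deg_additive: "additive f"
    and hom_deg_linear: "f (actM a x) = actN a (f x)"
    and hom_deg_graded: "x \<in> gM t \<Longrightarrow> f x \<in> gN (t * s)"
  using assms unfolding hom_deg_def additive_def by blast+

lemma hom_deg_add_closed:
  assumes "\<And>t. add_closed (gN t)" "\<And>a. additive (actN a)"
  shows "add_closed (hom_deg gM gN actM actN s)"
proof (rule add_closedI)
  show "0 \<in> hom_deg gM gN actM actN s"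
    by (rule hom_degI)
      (simp_all add: additive_def additive.zero[OF assms(2)] add_closed_zero[OF assms(1)])
  fix f g assume "f \<in> hom_deg gM gN actM actN s" "g \<in> hom_deg gM gN actM actN s"
  then show "f + g \<in> hom_deg gM gN actM actN s"
    by (intro hom_degI)
      (simp_all add: additive_def additive.add[OF hom_deg_additive] hom_deg_linear
        additive.add[OF assms(2)] add_closed_add[OF assms(1)] hom_deg_graded)
qed

lemma hom_deg_HOM: "f \<in> hom_deg gM gN actM actN s \<Longrightarrow> f \<in> HOM gM gN actM actN"
  unfolding HOM_def by (intro CollectI exI[of _ "{s}"] exI[of _ "\<lambda>_. f"]) auto

lemma HOM_add_closed:
  assumes "\<And>t. add_closed (gN t)" "\<And>a. additive (actN a)"
  shows "add_closed (HOM gM gN actM actN)"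
proof (rule add_closedI)
  show "0 \<in> HOM gM gN actM actN"
    unfolding HOM_def by (intro CollectI exI[of _ "{}"]) simp
  fix f g assume "f \<in> HOM gM gN actM actN" "g \<in> HOM gM gN actM actN"
  then obtain S S' c c' where S: "finite S" "\<forall>s\<in>S. c s \<in> hom_deg gM gN actM actN s" "f = sum c S"
    and S': "finite S'" "\<forall>s\<in>S'. c' s \<in> hom_deg gM gN actM actN s" "g = sum c' S'"
    unfolding HOM_def by blast
  define d where "d s = (if s \<in> S then c s else 0) + (if s \<in> S' then c' s else 0)" for s
  have "d s \<in> hom_deg gM gN actM actN s" for s
    using hom_deg_add_closed[OF assms, where gM=gM and actM=actM and s=s] S(2) S'(2)
    unfolding d_def add_closed_def by auto
  moreover have "f + g = sum d (S \<union> S')"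
    using S S' by (simp add: d_def sum.distrib sum.If_cases Int_absorb1)
  ultimately show "f + g \<in> HOM gM gN actM actN"
    unfolding HOM_def using S(1) S'(1) by blast
qed

lemma HOM_induct:
  assumes "f \<in> HOM gM gN actM actN" "additive F" "add_closed C"
    "\<And>s c. c \<in> hom_deg gM gN actM actN s \<Longrightarrow> F c \<in> C"
  shows "F f \<in> C"
proof -
  obtain S c where S: "\<forall>s\<in>S. c s \<in> hom_deg gM gN actM actN s" "f = sum c S"
    using assms(1) unfolding HOM_def by blast
  then have "F f = (\<Sum>s\<in>S. F (c s))"
    using assms(2) by (simp add: additive.sum)
  also have "\<dots> \<in> C"
    by (rule add_closed_sum[OF assms(3)]) (use assms(4) S(1) in blast)
  finally show ?thesis .
qed

lemma HOM_additive:
  assumes "f \<in> HOM gM gN actM actN" shows "additive f"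
proof -
  have "id f \<in> Collect additive"
    by (rule HOM_induct[OF assms])
      (simp_all add: additive_id add_closed_additive hom_deg_additive)
  then show ?thesis by simp
qed

lemma HOM_linear:
  assumes "f \<in> HOM gM gN actM actN" "additive (actN a)"
  shows "f (actM a x) = actN a (f x)"
proof -
  have "add_closed {f. f (actM a x) = actN a (f x)}"
    by (rule add_closedI) (simp_all add: additive.zero[OF assms(2)] additive.add[OF assms(2)])
  then have "id f \<in> {f. f (actM a x) = actN a (f x)}"
    by (rule HOM_induct[OF assms(1), rotated]) (simp_all add: additive_id hom_deg_linear)
  then show ?thesis by simp
qed

lemma additive_hom_act: "additive (hom_act rac b)"
  by (simp add: additive_def hom_act_def fun_eq_iff)

lemma hom_act_hom_act:
  assumes "\<And>m. rac m (b * b') = rac (rac m b) b'"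
  shows "hom_act rac b (hom_act rac b' f) = hom_act rac (b * b') f"
  using assms by (simp add: hom_act_def)

lemma hom_act_hom_deg:
  assumes M: "graded_rmod gB gM rac" "bimod_compat actM rac"
    and "b \<in> gB g" "f \<in> hom_deg gM gN actM actN d"
  shows "hom_act rac b f \<in> hom_deg gM gN actM actN (g * d)"
proof (rule hom_degI)
  show "additive (hom_act rac b f)"
    using additive.add[OF hom_deg_additive[OF assms(4)]] graded_rmodD(3)[OF M(1)]
    by (simp add: additive_def hom_act_def)
  show "hom_act rac b f (actM a x) = actN a (hom_act rac b f x)" for a x
    using M(2) hom_deg_linear[OF assms(4), of a "rac x b"]
    unfolding bimod_compat_def hom_act_def by simp
  show "hom_act rac b f x \<in> gN (t * (g * d))" if "x \<in> gM t" for t x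
    using hom_deg_graded[OF assms(4) graded_rmodD(5)[OF M(1) that assms(3)]]
    by (simp add: hom_act_def mult.assoc)
qed

lemma hom_act_HOM:
  assumes M: "grading UNIV gB" "graded_rmod gB gM rac" "bimod_compat actM rac"
    and N: "\<And>t. add_closed (gN t)" "\<And>a. additive (actN a)"
    and f: "f \<in> HOM gM gN actM actN"
  shows "hom_act rac b f \<in> HOM gM gN actM actN"
proof (rule HOM_induct[OF f additive_hom_act HOM_add_closed[OF N]])
  fix s c assume c: "c \<in> hom_deg gM gN actM actN s"
  show "hom_act rac b c \<in> HOM gM gN actM actN"
  proof (rule grading_induct[OF M(1), where f = "\<lambda>b. hom_act rac b c"])
    show "additive (\<lambda>b. hom_act rac b c)"
      using additive.add[OF hom_deg_additive[OF c]] graded_rmodD(2)[OF M(2)]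
      by (simp add: additive_def hom_act_def fun_eq_iff)
  next
    fix g x assume "x \<in> gB g"
    show "hom_act rac x c \<in> HOM gM gN actM actN"
      by (rule hom_deg_HOM[OF hom_act_hom_deg[OF M(2,3) \<open>x \<in> gB g\<close> c]])
  qed (rule HOM_add_closed[OF N])
qed

lemma span_hom_act_subset_HOM:
  assumes "grading UNIV gB" "graded_rmod gB gM rac" "bimod_compat actM rac"
    and N: "\<And>t. add_closed (gN t)" "\<And>a. additive (actN a)"
  shows "span_act (hom_act rac) (HOM gM gN actM actN) \<subseteq> HOM gM gN actM actN"
  by (rule span_act_subset[OF HOM_add_closed[OF N]]) (rule hom_act_HOM[OF assms])

lemma hom_deg_comp_act:
  assumes M: "graded_lmod gA gM act" and "m \<in> gM e" "f \<in> hom_deg gM gN act actN d"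
  shows "(\<lambda>x. f (act x m)) \<in> hom_deg gA gN (\<lambda>a x. a * x) actN (e * d)"
proof (rule hom_degI)
  show "additive (\<lambda>x. f (act x m))"
    using additive.add[OF hom_deg_additive[OF assms(3)]] graded_lmodD(2)[OF M]
    by (simp add: additive_def)
  show "f (act (a * x) m) = actN a (f (act x m))" for a x
    using graded_lmodD(4)[OF M] hom_deg_linear[OF assms(3)] by simp
  show "f (act x m) \<in> gN (t * (e * d))" if "x \<in> gA t" for t x
    using hom_deg_graded[OF assms(3) graded_lmodD(5)[OF M that assms(2)]]
    by (simp add: mult.assoc)
qed

lemma HOM_comp_act:
  assumes M: "graded_lmod gA gM act" and N: "\<And>t. add_closed (gN t)" "\<And>a. additive (actN a)"
    and f: "f \<in> HOM gM gN act actN"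
  shows "(\<lambda>x. f (act x m)) \<in> HOM gA gN (\<lambda>a x. a * x) actN"
proof (rule HOM_induct[OF f, where F = "\<lambda>f x. f (act x m)"])
  show "additive (\<lambda>f x. f (act x m))"
    by (simp add: additive_def plus_fun_def)
  show "add_closed (HOM gA gN (\<lambda>a x. a * x) actN)"
    by (rule HOM_add_closed[OF N])
  fix s c assume c: "c \<in> hom_deg gM gN act actN s"
  show "(\<lambda>x. c (act x m)) \<in> HOM gA gN (\<lambda>a x. a * x) actN"
  proof (rule grading_induct[OF graded_lmodD(1)[OF M], where f = "\<lambda>m x. c (act x m)"])
    show "additive (\<lambda>m x. c (act x m))"
      using additive.add[OF hom_deg_additive[OF c]] graded_lmodD(3)[OF M]
      by (simp add: additive_def fun_eq_iff)
  next
    fix e n assume "n \<in> gM e"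
    show "(\<lambda>x. c (act x n)) \<in> HOM gA gN (\<lambda>a x. a * x) actN"
      by (rule hom_deg_HOM[OF hom_deg_comp_act[OF M \<open>n \<in> gM e\<close> c]])
  qed (rule HOM_add_closed[OF N])
qed

lemma HOM_comp_act_span:
  assumes M: "graded_lmod gA gM act" "lunital act"
    and N: "\<And>t. add_closed (gN t)" "\<And>a. additive (actN a)"
    and f: "f \<in> HOM gM gN act actN"
  shows "(\<lambda>x. f (act x m)) \<in> span_act (hom_act (\<lambda>x a. x * a)) (HOM gA gN (\<lambda>a x. a * x) actN)"
proof (rule lunital_induct[OF M(2) _ span_act_add_closed, where f = "\<lambda>m x. f (act x m)"])
  show "additive (\<lambda>m x. f (act x m))"
    using additive.add[OF HOM_additive[OF f]] graded_lmodD(3)[OF M(1)]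
    by (simp add: additive_def fun_eq_iff)
  fix a n
  have "(\<lambda>x. f (act x (act a n))) = hom_act (\<lambda>x a. x * a) a (\<lambda>x. f (act x n))"
    using graded_lmodD(4)[OF M(1)] by (simp add: hom_act_def)
  then show "(\<lambda>x. f (act x (act a n)))
      \<in> span_act (hom_act (\<lambda>x a. x * a)) (HOM gA gN (\<lambda>a x. a * x) actN)"
    using span_act_gen[OF HOM_comp_act[OF M(1) N f]] by simp
qed

section \<open>Tensor products\<close>

lemma sum_lessThan_const_add: "(\<Sum>_<m + n::nat. v) = (\<Sum>_<m. v) + (\<Sum>_<n. v :: 'a::ab_group_add)"
  by (induction n) (simp_all add: add.assoc)

lemma zsmul_add: "zsmul (m + n) v = zsmul m v + zsmul n v"
proof -
  have zsmul: "zsmul k v = (\<Sum>_<nat k. v) - (\<Sum>_<nat (- k). v)" for k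
    unfolding zsmul_def by simp
  have "nat (m + n) + (nat (- m) + nat (- n)) = nat (- (m + n)) + (nat m + nat n)"
    by arith
  then have "(\<Sum>_<nat (m + n). v) + ((\<Sum>_<nat (- m). v) + (\<Sum>_<nat (- n). v))
      = (\<Sum>_<nat (- (m + n)). v) + ((\<Sum>_<nat m. v) + (\<Sum>_<nat n. v))"
    by (metis sum_lessThan_const_add)
  then show ?thesis
    unfolding zsmul by (simp add: algebra_simps)
qed

lemma zsmul_diff: "zsmul (m - n) v = zsmul m v - zsmul n v"
  using additive.diff[of "\<lambda>n. zsmul n v"] by (simp add: additive_def zsmul_add)

lemma zsmul_zero [simp]: "zsmul 0 v = 0"
  by (simp add: zsmul_def)

lemma zsmul_one [simp]: "zsmul 1 v = v"
  by (simp add: zsmul_def)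

definition supp :: "('z \<Rightarrow> int) \<Rightarrow> 'z set" where
  "supp x = {z. x z \<noteq> 0}"

lemma free_on_iff: "x \<in> free_on S \<longleftrightarrow> finite (supp x) \<and> supp x \<subseteq> S"
  unfolding free_on_def supp_def by simp

lemma supp_delta: "supp (delta z) = {z}"
  by (auto simp: supp_def delta_def)

lemma finite_supp_delta: "finite (supp (delta z))"
  by (simp add: supp_delta)

lemma supp_add_subset: "supp (x + y) \<subseteq> supp x \<union> supp y"
  by (auto simp: supp_def)

lemma supp_diff_subset: "supp (x - y) \<subseteq> supp x \<union> supp y"
  by (auto simp: supp_def)

lemma finite_supp_diff: "finite (supp x) \<Longrightarrow> finite (supp y) \<Longrightarrow> finite (supp (x - y))"
  by (rule finite_subset[OF supp_diff_subset]) simp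

lemma free_on_delta: "z \<in> S \<Longrightarrow> delta z \<in> free_on S"
  by (simp add: free_on_iff supp_delta)

lemma free_on_add: "x \<in> free_on S \<Longrightarrow> y \<in> free_on S \<Longrightarrow> x + y \<in> free_on S"
  using supp_add_subset[of x y] unfolding free_on_iff by (auto intro: finite_subset)

lemma free_on_diff: "x \<in> free_on S \<Longrightarrow> y \<in> free_on S \<Longrightarrow> x - y \<in> free_on S"
  using supp_diff_subset[of x y] unfolding free_on_iff by (auto intro: finite_subset)

lemma zlift_eq_sum:
  assumes "finite S" "supp x \<subseteq> S"
  shows "zlift tp x = (\<Sum>z\<in>S. zsmul (x z) (tp (fst z) (snd z)))"
  unfolding zlift_def
  by (rule sum.mono_neutral_left) (use assms in \<open>auto simp: supp_def\<close>)

lemma zlift_delta: "zlift tp (delta z) = tp (fst z) (snd z)"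
  using zlift_eq_sum[of "{z}" "delta z" tp, OF _ equalityD1[OF supp_delta]] by (simp add: delta_def)

lemma zlift_add:
  assumes "finite (supp x)" "finite (supp y)"
  shows "zlift tp (x + y) = zlift tp x + zlift tp y"
proof -
  let ?S = "supp x \<union> supp y"
  have "finite ?S" "supp (x + y) \<subseteq> ?S"
    using assms supp_add_subset by simp_all
  then show ?thesis
    using zlift_eq_sum[of ?S x tp] zlift_eq_sum[of ?S y tp] zlift_eq_sum[of ?S "x + y" tp]
    by (simp add: zsmul_add sum.distrib)
qed

lemma zlift_diff:
  assumes "finite (supp x)" "finite (supp y)"
  shows "zlift tp (x - y) = zlift tp x - zlift tp y"
proof -
  let ?S = "supp x \<union> supp y"
  have "finite ?S" "supp (x - y) \<subseteq> ?S"
    using assms supp_diff_subset by simp_all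
  then show ?thesis
    using zlift_eq_sum[of ?S x tp] zlift_eq_sum[of ?S y tp] zlift_eq_sum[of ?S "x - y" tp]
    by (simp add: zsmul_diff sum_subtractf)
qed

lemma zlift_delta_diff: "zlift F (delta z - delta z') = F (fst z) (snd z) - F (fst z') (snd z')"
  by (simp only: zlift_diff[OF finite_supp_delta finite_supp_delta] zlift_delta)

lemma zlift_delta_diff2:
  "zlift F (delta z - delta z' - delta z'') =
    F (fst z) (snd z) - F (fst z') (snd z') - F (fst z'') (snd z'')"
  by (simp only: zlift_diff[OF finite_supp_diff[OF finite_supp_delta finite_supp_delta]
    finite_supp_delta] zlift_delta_diff zlift_delta)

definition balanced_map ::
  "'x set \<Rightarrow> 'y set \<Rightarrow> ('x::ab_group_add \<Rightarrow> 'r \<Rightarrow> 'x) \<Rightarrow> ('r \<Rightarrow> 'y::ab_group_add \<Rightarrow> 'y) \<Rightarrow>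
   ('x \<Rightarrow> 'y \<Rightarrow> 'u::ab_group_add) \<Rightarrow> bool" where
  "balanced_map X1 X2 rac lac F \<longleftrightarrow>
     (\<forall>u\<in>X1. \<forall>u'\<in>X1. \<forall>y\<in>X2. F (u + u') y = F u y + F u' y) \<and>
     (\<forall>u\<in>X1. \<forall>y\<in>X2. \<forall>y'\<in>X2. F u (y + y') = F u y + F u y') \<and>
     (\<forall>u\<in>X1. \<forall>y\<in>X2. \<forall>r. rac u r \<in> X1 \<and> lac r y \<in> X2 \<longrightarrow> F (rac u r) y = F u (lac r y))"

lemma is_tensor_balanced_map: "is_tensor X1 X2 rac lac tp \<Longrightarrow> balanced_map X1 X2 rac lac tp"
  unfolding is_tensor_def balanced_map_def by blast

lemma tensor_rels_finite_supp:
  assumes "x \<in> tensor_rels X1 X2 rac lac" shows "finite (supp x)"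
  using assms
  by (induction rule: tensor_rels.induct)
    (simp add: supp_def, (intro finite_supp_diff; simp add: supp_delta)+)

lemma tensor_rels_zlift:
  assumes "x \<in> tensor_rels X1 X2 rac lac" "balanced_map X1 X2 rac lac F"
  shows "zlift F x = 0"
  using assms(1)
proof (induction rule: tensor_rels.induct)
  case rel_zero
  show ?case by (simp add: zlift_def)
next
  case rel_add1
  then show ?case using assms(2) by (subst zlift_delta_diff2) (simp add: balanced_map_def)
next
  case rel_add2
  then show ?case using assms(2) by (subst zlift_delta_diff2) (simp add: balanced_map_def)
next
  case rel_bal
  then show ?case using assms(2) by (subst zlift_delta_diff) (simp add: balanced_map_def)
next
  case (rel_diff x x')
  then show ?case by (subst zlift_diff) (simp_all add: tensor_rels_finite_supp)
qed

lemma is_tensor_generated: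
  assumes "is_tensor X1 X2 rac lac tp"
  obtains xs where "set xs \<subseteq> X1 \<times> X2" "t = sum_list (map (\<lambda>(u, y). tp u y) xs)"
  using assms unfolding is_tensor_def by blast

lemma is_tensor_zlift_onto:
  assumes "is_tensor X1 X2 rac lac tp"
  shows "\<exists>x. x \<in> free_on (X1 \<times> X2) \<and> zlift tp x = t"
proof -
  obtain xs where xs: "set xs \<subseteq> X1 \<times> X2" "t = sum_list (map (\<lambda>(u, y). tp u y) xs)"
    using is_tensor_generated[OF assms] .
  have "sum_list (map delta xs) \<in> free_on (X1 \<times> X2) \<and>
      zlift tp (sum_list (map delta xs)) = sum_list (map (\<lambda>(u, y). tp u y) xs)"
    using xs(1)
  proof (induction xs)
    case Nil
    then show ?case by (simp add: free_on_def zlift_def)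
  next
    case (Cons z xs)
    obtain u y where z: "z = (u, y)" by (cases z)
    let ?r = "sum_list (map delta xs)"
    have r: "?r \<in> free_on (X1 \<times> X2)" "zlift tp ?r = sum_list (map (\<lambda>(u, y). tp u y) xs)"
      and uy: "(u, y) \<in> X1 \<times> X2"
      using Cons z by auto
    have "finite (supp ?r)"
      using r(1) by (simp add: free_on_iff)
    then have "zlift tp (delta (u, y) + ?r) = tp u y + zlift tp ?r"
      by (simp only: zlift_add[OF finite_supp_delta] zlift_delta fst_conv snd_conv)
    with free_on_add[OF free_on_delta[OF uy] r(1)] r(2) show ?case
      by (simp only: z list.map sum_list.Cons prod.case simp_thms)
  qed
  with xs(2) show ?thesis by blast
qed

text \<open>SOME picks an arbitrary representative in the free abelian group; the choice does not
  matter because two representatives differ by a relation, on which a balanced map vanishes.\<close>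
definition tensor_lift ::
  "'x set \<Rightarrow> 'y set \<Rightarrow> ('x \<Rightarrow> 'y \<Rightarrow> 't::ab_group_add) \<Rightarrow> ('x \<Rightarrow> 'y \<Rightarrow> 'u::ab_group_add) \<Rightarrow> 't \<Rightarrow> 'u"
  where "tensor_lift X1 X2 tp F t = zlift F (SOME x. x \<in> free_on (X1 \<times> X2) \<and> zlift tp x = t)"

lemma tensor_lift_zlift:
  assumes T: "is_tensor X1 X2 rac lac tp" and F: "balanced_map X1 X2 rac lac F"
    and x: "x \<in> free_on (X1 \<times> X2)"
  shows "tensor_lift X1 X2 tp F (zlift tp x) = zlift F x"
proof -
  define x' where "x' = (SOME x'. x' \<in> free_on (X1 \<times> X2) \<and> zlift tp x' = zlift tp x)"
  have x': "x' \<in> free_on (X1 \<times> X2)" "zlift tp x' = zlift tp x"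
    using someI_ex[OF is_tensor_zlift_onto[OF T]] unfolding x'_def by blast+
  have fin: "finite (supp x)" "finite (supp x')"
    using x x'(1) by (simp_all add: free_on_iff)
  have "x' - x \<in> free_on (X1 \<times> X2)" "zlift tp (x' - x) = 0"
    using free_on_diff[OF x'(1) x] x'(2) by (simp_all add: zlift_diff fin)
  then have "x' - x \<in> tensor_rels X1 X2 rac lac"
    using T unfolding is_tensor_def by blast
  then have "zlift F (x' - x) = 0"
    using F by (rule tensor_rels_zlift)
  then show ?thesis
    unfolding tensor_lift_def x'_def[symmetric] by (simp add: zlift_diff fin)
qed

lemma tensor_lift_tp:
  assumes "is_tensor X1 X2 rac lac tp" "balanced_map X1 X2 rac lac F" "u \<in> X1" "y \<in> X2"
  shows "tensor_lift X1 X2 tp F (tp u y) = F u y"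
  using tensor_lift_zlift[OF assms(1,2) free_on_delta[of "(u, y)"]] assms(3,4)
  by (simp add: zlift_delta)

lemma tensor_lift_additive:
  assumes T: "is_tensor X1 X2 rac lac tp" and F: "balanced_map X1 X2 rac lac F"
  shows "additive (tensor_lift X1 X2 tp F)"
proof (rule additive.intro)
  fix s t
  obtain x y where x: "x \<in> free_on (X1 \<times> X2)" "zlift tp x = s"
    and y: "y \<in> free_on (X1 \<times> X2)" "zlift tp y = t"
    using is_tensor_zlift_onto[OF T] by metis
  have fin: "finite (supp x)" "finite (supp y)"
    using x(1) y(1) by (simp_all add: free_on_iff)
  have "tensor_lift X1 X2 tp F (s + t) = tensor_lift X1 X2 tp F (zlift tp (x + y))"
    using x(2) y(2) by (simp add: zlift_add fin)
  also have "\<dots> = zlift F x + zlift F y"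
    using tensor_lift_zlift[OF T F free_on_add[OF x(1) y(1)]] by (simp add: zlift_add fin)
  also have "\<dots> = tensor_lift X1 X2 tp F s + tensor_lift X1 X2 tp F t"
    using tensor_lift_zlift[OF T F x(1)] tensor_lift_zlift[OF T F y(1)] x(2) y(2) by simp
  finally show "tensor_lift X1 X2 tp F (s + t) = tensor_lift X1 X2 tp F s + tensor_lift X1 X2 tp F t" .
qed

lemma tensor_additive_mem:
  assumes "is_tensor X1 X2 rac lac tp" "additive f" "add_closed C"
    "\<And>u y. u \<in> X1 \<Longrightarrow> y \<in> X2 \<Longrightarrow> f (tp u y) \<in> C"
  shows "f t \<in> C"
proof -
  obtain xs where xs: "set xs \<subseteq> X1 \<times> X2" "t = sum_list (map (\<lambda>(u, y). tp u y) xs)"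
    using is_tensor_generated[OF assms(1)] .
  then have "f t = sum_list (map (f \<circ> (\<lambda>(u, y). tp u y)) xs)"
    by (simp add: additive.sum_list[OF assms(2)])
  also have "\<dots> \<in> C"
    by (rule add_closed_sum_list[OF assms(3)]) (use xs(1) assms(4) in auto)
  finally show ?thesis .
qed

lemma tensor_additive_eqI:
  assumes "is_tensor X1 X2 rac lac tp" "additive f" "additive g"
    "\<And>u y. u \<in> X1 \<Longrightarrow> y \<in> X2 \<Longrightarrow> f (tp u y) = g (tp u y)"
  shows "f t = g t"
proof -
  have "additive (\<lambda>t. f t - g t)"
    unfolding additive_def using additive.add[OF assms(2)] additive.add[OF assms(3)] by simp
  then have "f t - g t \<in> {0}"
    by (rule tensor_additive_mem[OF assms(1) _ add_closed_zero_set]) (simp add: assms(4))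
  then show ?thesis by simp
qed

lemma tensor_action_additive_scalar:
  assumes T: "is_tensor X1 X2 rac lac tp" and la: "\<And>a. additive (la a)"
    and la_tp: "\<And>a u y. u \<in> X1 \<Longrightarrow> y \<in> X2 \<Longrightarrow> la a (tp u y) = tp (lact a u) y"
    and lact: "\<And>a u. u \<in> X1 \<Longrightarrow> lact a u \<in> X1" "\<And>a a' u. lact (a + a') u = lact a u + lact a' u"
  shows "additive (\<lambda>a. la a t)"
proof (rule additive.intro)
  fix a a'
  show "la (a + a') t = la a t + la a' t"
  proof (rule tensor_additive_eqI[OF T la])
    show "additive (\<lambda>t. la a t + la a' t)"
      unfolding additive_def using additive.add[OF la] by (simp add: algebra_simps)
    fix u y assume "u \<in> X1" "y \<in> X2"
    then show "la (a + a') (tp u y) = la a (tp u y) + la a' (tp u y)"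
      using is_tensor_balanced_map[OF T] by (simp add: la_tp lact balanced_map_def)
  qed
qed

lemma tensor_grading_gen: "u \<in> gX a \<Longrightarrow> y \<in> gY b \<Longrightarrow> tp u y \<in> tensor_grading gX gY tp (a * b)"
  unfolding tensor_grading_def by (intro CollectI exI[of _ "[(u, y)]"]) auto

lemma tensor_grading_add_closed: "add_closed (tensor_grading gX gY tp s)"
proof (rule add_closedI)
  show "0 \<in> tensor_grading gX gY tp s"
    unfolding tensor_grading_def by (intro CollectI exI[of _ "[]"]) auto
  fix x y assume "x \<in> tensor_grading gX gY tp s" "y \<in> tensor_grading gX gY tp s"
  then obtain xs ys where
    "x = sum_list (map (\<lambda>(u, y). tp u y) xs)" "\<forall>z\<in>set xs. \<exists>a b. fst z \<in> gX a \<and> snd z \<in> gY b \<and> a * b = s"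
    "y = sum_list (map (\<lambda>(u, y). tp u y) ys)" "\<forall>z\<in>set ys. \<exists>a b. fst z \<in> gX a \<and> snd z \<in> gY b \<and> a * b = s"
    unfolding tensor_grading_def by blast
  then show "x + y \<in> tensor_grading gX gY tp s"
    unfolding tensor_grading_def by (intro CollectI exI[of _ "xs @ ys"]) auto
qed

lemma additive_image_tensor_grading:
  assumes "additive f" "add_closed C"
    "\<And>u y a b. u \<in> gX a \<Longrightarrow> y \<in> gY b \<Longrightarrow> a * b = s \<Longrightarrow> f (tp u y) \<in> C"
  shows "f ` tensor_grading gX gY tp s \<subseteq> C"
proof
  fix w assume "w \<in> f ` tensor_grading gX gY tp s"
  then obtain xs where w: "w = f (sum_list (map (\<lambda>(u, y). tp u y) xs))"
    and xs: "\<forall>z\<in>set xs. \<exists>a b. fst z \<in> gX a \<and> snd z \<in> gY b \<and> a * b = s"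
    unfolding tensor_grading_def by blast
  have "w = sum_list (map (f \<circ> (\<lambda>(u, y). tp u y)) xs)"
    by (simp add: w additive.sum_list[OF assms(1)])
  also have "\<dots> \<in> C"
    by (rule add_closed_sum_list[OF assms(2)]) (use xs assms(3) in fastforce)
  finally show "w \<in> C" .
qed

locale graded_morita =
  fixes gA :: "'g::mult_group \<Rightarrow> 'a::ring set" and gB :: "'g \<Rightarrow> 'b::ring set"
    and gP :: "'g \<Rightarrow> 'p::ab_group_add set" and gQ :: "'g \<Rightarrow> 'q::ab_group_add set"
    and lP :: "'a \<Rightarrow> 'p \<Rightarrow> 'p" and rP :: "'p \<Rightarrow> 'b \<Rightarrow> 'p"
    and lQ :: "'b \<Rightarrow> 'q \<Rightarrow> 'q" and rQ :: "'q \<Rightarrow> 'a \<Rightarrow> 'q"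
    and mu :: "'p \<Rightarrow> 'q \<Rightarrow> 'a" and nu :: "'q \<Rightarrow> 'p \<Rightarrow> 'b"
  assumes morita: "graded_morita_context gA gB gP gQ lP rP lQ rQ mu nu"
begin

lemma
  shows grading_B: "grading UNIV gB"
    and B_idempotent: "\<exists>xs. (b::'b) = sum_list (map (\<lambda>(x, y). x * y) xs)"
    and P_lmod: "graded_lmod gA gP lP"
    and P_rmod: "graded_rmod gB gP rP"
    and P_bimod: "bimod_compat lP rP"
    and P_lunital: "lunital lP"
    and Q_lmod: "graded_lmod gB gQ lQ"
    and Q_lunital: "lunital lQ"
    and mu_add_left: "mu (p + p') q = mu p q + mu p' q"
    and mu_add_right: "mu p (q + q') = mu p q + mu p q'"
    and mu_rP: "mu (rP p b) q = mu p (lQ b q)"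
    and mu_lP: "mu (lP a p) q = a * mu p q"
    and mu_graded: "p \<in> gP s \<Longrightarrow> q \<in> gQ t \<Longrightarrow> mu p q \<in> gA (s * t)"
    and nu_add_right: "nu q (p + p') = nu q p + nu q p'"
    and nu_rP: "nu q (rP p b) = nu q p * b"
    and rP_nu: "rP p' (nu q p) = lP (mu p' q) p"
  using morita unfolding graded_morita_context_def graded_ring_def idempotent_ring_def
  by simp_all

lemma B_product_induct:
  assumes "additive f" "add_closed C" "\<And>x y. f (x * y) \<in> C"
  shows "f (b::'b) \<in> C"
  using B_idempotent[of b] additive_mem_sum_list[OF assms] by force

lemma mu_induct:
  assumes "surjective_traces mu nu" "additive f" "add_closed C" "\<And>p q. f (mu p q) \<in> C"
  shows "f a \<in> C"
proof -
  obtain xs where "a = sum_list (map (\<lambda>(p, q). mu p q) xs)"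
    using assms(1) unfolding surjective_traces_def by blast
  then show ?thesis
    using additive_mem_sum_list[OF assms(2,3) assms(4)] by simp
qed

lemma nu_induct:
  assumes "surjective_traces mu nu" "additive f" "add_closed C" "\<And>q p. f (nu q p) \<in> C"
  shows "f b \<in> C"
proof -
  obtain xs where "b = sum_list (map (\<lambda>(q, p). nu q p) xs)"
    using assms(1) unfolding surjective_traces_def by blast
  then show ?thesis
    using additive_mem_sum_list[OF assms(2,3) assms(4)] by simp
qed

end

section \<open>The comparison map for graded duals\<close>

locale graded_morita_dual = graded_morita +
  fixes gK lK tp1 la1
  assumes K: "graded_lmod gA gK lK"
    and T1: "is_tensor UNIV (span_act (hom_act rP) (HOM gP gK lP lK)) rP (hom_act rP) tp1"
    and la1_tp1: "f \<in> span_act (hom_act rP) (HOM gP gK lP lK) \<Longrightarrow> la1 a (tp1 p f) = tp1 (lP a p) f"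
    and la1_additive: "additive (la1 a)"
begin

abbreviation BH where
  "BH \<equiv> span_act (hom_act rP) (HOM gP gK lP lK)"

abbreviation AH where
  "AH \<equiv> span_act (hom_act (\<lambda>x a. x * a)) (HOM gA gK (\<lambda>a x. a * x) lK)"

lemma K_add_closed: "add_closed (gK t)"
  using grading_add_closed[OF graded_lmodD(1)[OF K]] .

lemma lK_additive: "additive (lK a)"
  using graded_lmodD(3)[OF K] by (simp add: additive_def)

lemma HOM_K_add_closed: "add_closed (HOM gM gK actM lK)"
  by (rule HOM_add_closed[where gN = gK and actN = lK, OF K_add_closed lK_additive])

lemma BH_subset_HOM: "BH \<subseteq> HOM gP gK lP lK"
  by (rule span_hom_act_subset_HOM[OF grading_B P_rmod P_bimod K_add_closed lK_additive])

lemma BH_additive: "f \<in> BH \<Longrightarrow> additive f"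
  by (rule HOM_additive[OF subsetD[OF BH_subset_HOM]])

lemma BH_linear: "f \<in> BH \<Longrightarrow> f (lP a x) = lK a (f x)"
  by (rule HOM_linear[OF subsetD[OF BH_subset_HOM] lK_additive])

lemma BH_comp_lP: "f \<in> BH \<Longrightarrow> (\<lambda>x. f (lP x p)) \<in> AH"
  by (rule HOM_comp_act_span[where gN = gK and actN = lK,
        OF P_lmod P_lunital K_add_closed lK_additive subsetD[OF BH_subset_HOM]])

lemma hom_act_BH: "f \<in> BH \<Longrightarrow> hom_act rP b f \<in> BH"
  by (rule span_act_act)
    (simp_all add: hom_act_hom_act graded_rmodD(4)[OF P_rmod] additive_hom_act)

lemma tp1_add_right: "f \<in> BH \<Longrightarrow> g \<in> BH \<Longrightarrow> tp1 p (f + g) = tp1 p f + tp1 p g"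
  using is_tensor_balanced_map[OF T1] by (simp add: balanced_map_def)

lemma tp1_rP: "f \<in> BH \<Longrightarrow> tp1 (rP p b) f = tp1 p (hom_act rP b f)"
  using is_tensor_balanced_map[OF T1] hom_act_BH by (simp add: balanced_map_def)

lemma zero_BH: "0 \<in> BH"
  by (rule add_closed_zero[OF span_act_add_closed])

lemma tp1_zero: "tp1 p 0 = 0"
  using tp1_add_right[OF zero_BH zero_BH, of p] by simp

lemma comp_lP_balanced: "balanced_map UNIV BH rP (hom_act rP) (\<lambda>p f x. f (lP x p))"
  unfolding balanced_map_def
  using additive.add[OF BH_additive] graded_lmodD(3)[OF P_lmod] P_bimod
  by (simp add: fun_eq_iff hom_act_def bimod_compat_def)

definition phi where
  "phi = tensor_lift UNIV BH tp1 (\<lambda>p f x. f (lP x p))"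

lemma phi_additive: "additive phi"
  unfolding phi_def by (rule tensor_lift_additive[OF T1 comp_lP_balanced])

lemma phi_tp1: "f \<in> BH \<Longrightarrow> phi (tp1 p f) = (\<lambda>x. f (lP x p))"
  unfolding phi_def by (rule tensor_lift_tp[OF T1 comp_lP_balanced]) simp_all

lemma phi_la1: "phi (la1 a t) = hom_act (\<lambda>x a. x * a) a (phi t)"
proof (rule tensor_additive_eqI[OF T1, where f = "\<lambda>t. phi (la1 a t)"])
  show "additive (\<lambda>t. phi (la1 a t))"
    using additive.add[OF phi_additive] additive.add[OF la1_additive] by (simp add: additive_def)
  show "additive (\<lambda>t. hom_act (\<lambda>x a. x * a) a (phi t))"
    using additive.add[OF phi_additive] by (simp add: additive_def hom_act_def plus_fun_def)
  fix u f assume "f \<in> BH"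
  then show "phi (la1 a (tp1 u f)) = hom_act (\<lambda>x a. x * a) a (phi (tp1 u f))"
    by (simp add: la1_tp1 phi_tp1 hom_act_def graded_lmodD(4)[OF P_lmod])
qed

lemma phi_graded:
  "phi ` tensor_grading gP (\<lambda>b. BH \<inter> hom_deg gP gK lP lK b) tp1 s
    \<subseteq> AH \<inter> hom_deg gA gK (\<lambda>a x. a * x) lK s"
proof (rule additive_image_tensor_grading[OF phi_additive add_closed_Int[OF span_act_add_closed
      hom_deg_add_closed[OF K_add_closed lK_additive]]])
  fix u f c d assume "u \<in> gP c" "f \<in> BH \<inter> hom_deg gP gK lP lK d" "c * d = s"
  then show "phi (tp1 u f) \<in> AH \<inter> hom_deg gA gK (\<lambda>a x. a * x) lK s"
    using BH_comp_lP hom_deg_comp_act[OF P_lmod] by (auto simp: phi_tp1)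
qed

lemma phi_in_AH: "phi t \<in> AH"
  by (rule tensor_additive_mem[OF T1 phi_additive span_act_add_closed])
    (simp add: phi_tp1 BH_comp_lP)

lemma hom_deg_comp_mu:
  assumes "q \<in> gQ e" "c \<in> hom_deg gA gK (\<lambda>a x. a * x) lK s"
  shows "(\<lambda>m. c (mu m q)) \<in> hom_deg gP gK lP lK (e * s)"
proof (rule hom_degI)
  show "additive (\<lambda>m. c (mu m q))"
    using additive.add[OF hom_deg_additive[OF assms(2)]] by (simp add: additive_def mu_add_left)
  show "c (mu (lP a x) q) = lK a (c (mu x q))" for a x
    using hom_deg_linear[OF assms(2)] by (simp add: mu_lP)
  show "c (mu x q) \<in> gK (t * (e * s))" if "x \<in> gP t" for t x
    using hom_deg_graded[OF assms(2) mu_graded[OF that assms(1)]] by (simp add: mult.assoc)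
qed

lemma HOM_comp_mu:
  assumes "h \<in> HOM gA gK (\<lambda>a x. a * x) lK"
  shows "(\<lambda>m. h (mu m q)) \<in> HOM gP gK lP lK"
proof (rule HOM_induct[OF assms _ HOM_K_add_closed, where F = "\<lambda>h m. h (mu m q)"])
  show "additive (\<lambda>h m. h (mu m q))"
    by (simp add: additive_def plus_fun_def)
  fix s c assume c: "c \<in> hom_deg gA gK (\<lambda>a x. a * x) lK s"
  show "(\<lambda>m. c (mu m q)) \<in> HOM gP gK lP lK"
  proof (rule grading_induct[OF graded_lmodD(1)[OF Q_lmod] _ HOM_K_add_closed,
        where f = "\<lambda>q m. c (mu m q)"])
    show "additive (\<lambda>q m. c (mu m q))"
      using additive.add[OF hom_deg_additive[OF c]]
      by (simp add: additive_def fun_eq_iff mu_add_right)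
    fix e q' assume "q' \<in> gQ e"
    show "(\<lambda>m. c (mu m q')) \<in> HOM gP gK lP lK"
      by (rule hom_deg_HOM[OF hom_deg_comp_mu[OF \<open>q' \<in> gQ e\<close> c]])
  qed
qed

lemma comp_mu_BH:
  assumes "h \<in> HOM gA gK (\<lambda>a x. a * x) lK"
  shows "(\<lambda>m. h (mu m q)) \<in> BH"
proof (rule lunital_induct[OF Q_lunital _ span_act_add_closed, where f = "\<lambda>q m. h (mu m q)"])
  show "additive (\<lambda>q m. h (mu m q))"
    using additive.add[OF HOM_additive[OF assms]]
    by (simp add: additive_def fun_eq_iff mu_add_right)
  fix b n
  have "(\<lambda>m. h (mu m (lQ b n))) = hom_act rP b (\<lambda>m. h (mu m n))"
    by (simp add: hom_act_def mu_rP)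
  then show "(\<lambda>m. h (mu m (lQ b n))) \<in> BH"
    using span_act_gen[OF HOM_comp_mu[OF assms]] by simp
qed

lemma phi_comp_mu:
  "h \<in> HOM gA gK (\<lambda>a x. a * x) lK \<Longrightarrow>
    phi (tp1 p (\<lambda>m. h (mu m q))) = hom_act (\<lambda>x a. x * a) (mu p q) h"
  by (simp add: phi_tp1 comp_mu_BH hom_act_def mu_lP)

lemma AH_subset_range_phi:
  assumes "surjective_traces mu nu"
  shows "AH \<subseteq> range phi"
proof (rule span_act_subset[OF add_closed_range[OF phi_additive]])
  fix a h assume h: "h \<in> HOM gA gK (\<lambda>a x. a * x) lK"
  show "hom_act (\<lambda>x a. x * a) a h \<in> range phi"
  proof (rule mu_induct[OF assms _ add_closed_range[OF phi_additive],
        where f = "\<lambda>a. hom_act (\<lambda>x a. x * a) a h"])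
    show "additive (\<lambda>a. hom_act (\<lambda>x a. x * a) a h)"
      using additive.add[OF HOM_additive[OF h]]
      by (simp add: additive_def hom_act_def distrib_left plus_fun_def)
    show "hom_act (\<lambda>x a. x * a) (mu p q) h \<in> range phi" for p q
      using phi_comp_mu[OF h] by (metis rangeI)
  qed
qed

lemma range_phi: "surjective_traces mu nu \<Longrightarrow> range phi = AH"
  using AH_subset_range_phi phi_in_AH by blast

lemma phi_tp1_comp_mu: "f \<in> BH \<Longrightarrow> (\<lambda>m. phi (tp1 u f) (mu m q)) = hom_act rP (nu q u) f"
  by (simp add: phi_tp1 hom_act_def rP_nu)

lemma phi_comp_mu_additive: "additive (\<lambda>t m. phi t (mu m q))"
  using additive.add[OF phi_additive] by (simp add: additive_def fun_eq_iff)

lemma phi_comp_mu_BH: "(\<lambda>m. phi t (mu m q)) \<in> BH"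
  by (rule tensor_additive_mem[OF T1 phi_comp_mu_additive span_act_add_closed])
    (simp add: phi_tp1_comp_mu hom_act_BH)

lemma la1_mu: "la1 (mu p q) t = tp1 p (\<lambda>m. phi t (mu m q))"
proof (rule tensor_additive_eqI[OF T1 la1_additive])
  show "additive (\<lambda>t. tp1 p (\<lambda>m. phi t (mu m q)))"
    using additive.add[OF phi_comp_mu_additive] tp1_add_right[OF phi_comp_mu_BH phi_comp_mu_BH]
    by (simp add: additive_def)
  fix u f assume f: "f \<in> BH"
  have "la1 (mu p q) (tp1 u f) = tp1 p (hom_act rP (nu q u) f)"
    by (simp add: la1_tp1[OF f] rP_nu[symmetric] tp1_rP[OF f])
  then show "la1 (mu p q) (tp1 u f) = tp1 p (\<lambda>m. phi (tp1 u f) (mu m q))"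
    by (simp only: phi_tp1_comp_mu[OF f])
qed

lemma phi_kernel:
  assumes "surjective_traces mu nu" "phi t = 0"
  shows "la1 a t = 0"
proof -
  have "additive (\<lambda>a. la1 a t)"
    by (rule tensor_action_additive_scalar[OF T1 la1_additive, where lact = lP])
      (simp_all add: la1_tp1 graded_lmodD(2)[OF P_lmod])
  moreover have "la1 (mu p q) t \<in> {0}" for p q
  proof -
    have "(\<lambda>m. phi t (mu m q)) = 0"
      using assms(2) by (simp add: fun_eq_iff)
    then show ?thesis by (simp add: la1_mu tp1_zero)
  qed
  ultimately have "(\<lambda>a. la1 a t) a \<in> {0}"
    by (rule mu_induct[OF assms(1) _ add_closed_zero_set])
  then show ?thesis by simp
qed

end

section \<open>The comparison map for tensor products\<close>

locale graded_morita_tensor = graded_morita +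
  fixes gL lL tp2 lb2 tp3 la3
  assumes L: "graded_lmod gB gL lL"
    and T2: "is_tensor UNIV UNIV (\<lambda>x b. x * b) lL tp2"
    and lb2_tp2: "lb2 b' (tp2 b l) = tp2 (b' * b) l"
    and lb2_additive: "additive (lb2 b)"
    and T3: "is_tensor UNIV UNIV rP lL tp3"
    and la3_tp3: "la3 a (tp3 p l) = tp3 (lP a p) l"
    and la3_additive: "additive (la3 a)"
begin

abbreviation gPL where
  "gPL \<equiv> tensor_grading gP gL tp3"

abbreviation BH2 where
  "BH2 \<equiv> span_act (hom_act rP) (HOM gP gPL lP la3)"

lemma
  shows tp2_add_left: "tp2 (b + b') l = tp2 b l + tp2 b' l"
    and tp2_add_right: "tp2 b (l + l') = tp2 b l + tp2 b l'"
    and tp2_mult: "tp2 (b * b') l = tp2 b (lL b' l)"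
  using is_tensor_balanced_map[OF T2] by (simp_all add: balanced_map_def)

lemma
  shows tp3_add_left: "tp3 (p + p') l = tp3 p l + tp3 p' l"
    and tp3_add_right: "tp3 p (l + l') = tp3 p l + tp3 p l'"
    and tp3_rP: "tp3 (rP p b) l = tp3 p (lL b l)"
  using is_tensor_balanced_map[OF T3] by (simp_all add: balanced_map_def)

lemma HOM_PL_add_closed: "add_closed (HOM gM gPL actM la3)"
  by (rule HOM_add_closed[where gN = gPL and actN = la3, OF tensor_grading_add_closed la3_additive])

lemma rP_tp3_hom_deg:
  assumes "b \<in> gB c" "l \<in> gL d"
  shows "(\<lambda>p. tp3 (rP p b) l) \<in> hom_deg gP gPL lP la3 (c * d)"
proof (rule hom_degI)
  show "additive (\<lambda>p. tp3 (rP p b) l)"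
    by (simp add: additive_def graded_rmodD(3)[OF P_rmod] tp3_add_left)
  show "tp3 (rP (lP a x) b) l = la3 a (tp3 (rP x b) l)" for a x
    using P_bimod by (simp add: bimod_compat_def la3_tp3)
  show "tp3 (rP x b) l \<in> gPL (t * (c * d))" if "x \<in> gP t" for t x
    using tensor_grading_gen[where gX = gP and gY = gL and tp = tp3, OF graded_rmodD(5)[OF P_rmod that assms(1)] assms(2)]
    by (simp add: mult.assoc)
qed

lemma rP_tp3_HOM: "(\<lambda>p. tp3 (rP p b) l) \<in> HOM gP gPL lP la3"
proof (rule grading_induct[OF grading_B _ HOM_PL_add_closed, where f = "\<lambda>b p. tp3 (rP p b) l"])
  show "additive (\<lambda>b p. tp3 (rP p b) l)"
    by (simp add: additive_def fun_eq_iff graded_rmodD(2)[OF P_rmod] tp3_add_left)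
  fix c x assume x: "x \<in> gB c"
  show "(\<lambda>p. tp3 (rP p x) l) \<in> HOM gP gPL lP la3"
  proof (rule grading_induct[OF graded_lmodD(1)[OF L] _ HOM_PL_add_closed,
        where f = "\<lambda>l p. tp3 (rP p x) l"])
    show "additive (\<lambda>l p. tp3 (rP p x) l)"
      by (simp add: additive_def fun_eq_iff tp3_add_right)
    fix d y assume "y \<in> gL d"
    show "(\<lambda>p. tp3 (rP p x) y) \<in> HOM gP gPL lP la3"
      by (rule hom_deg_HOM[OF rP_tp3_hom_deg[OF x \<open>y \<in> gL d\<close>]])
  qed
qed

lemma rP_tp3_BH2: "(\<lambda>p. tp3 (rP p b) l) \<in> BH2"
proof (rule B_product_induct[OF _ span_act_add_closed, where f = "\<lambda>b p. tp3 (rP p b) l"])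
  show "additive (\<lambda>b p. tp3 (rP p b) l)"
    by (simp add: additive_def fun_eq_iff graded_rmodD(2)[OF P_rmod] tp3_add_left)
  fix x y
  have "(\<lambda>p. tp3 (rP p (x * y)) l) = hom_act rP x (\<lambda>p. tp3 (rP p y) l)"
    by (simp add: hom_act_def graded_rmodD(4)[OF P_rmod])
  then show "(\<lambda>p. tp3 (rP p (x * y)) l) \<in> BH2"
    using span_act_gen[OF rP_tp3_HOM] by simp
qed

lemma rP_tp3_balanced: "balanced_map UNIV UNIV (\<lambda>x b. x * b) lL (\<lambda>b l p. tp3 (rP p b) l)"
  by (simp add: balanced_map_def fun_eq_iff graded_rmodD(2,4)[OF P_rmod] graded_lmodD(2-4)[OF L]
      tp3_add_left tp3_add_right tp3_rP)

definition gamma where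
  "gamma = tensor_lift UNIV UNIV tp2 (\<lambda>b l p. tp3 (rP p b) l)"

lemma gamma_additive: "additive gamma"
  unfolding gamma_def by (rule tensor_lift_additive[OF T2 rP_tp3_balanced])

lemma gamma_tp2: "gamma (tp2 b l) = (\<lambda>p. tp3 (rP p b) l)"
  unfolding gamma_def by (rule tensor_lift_tp[OF T2 rP_tp3_balanced]) simp_all

lemma gamma_lb2: "gamma (lb2 b t) = hom_act rP b (gamma t)"
proof (rule tensor_additive_eqI[OF T2, where f = "\<lambda>t. gamma (lb2 b t)"])
  show "additive (\<lambda>t. gamma (lb2 b t))"
    using additive.add[OF gamma_additive] additive.add[OF lb2_additive] by (simp add: additive_def)
  show "additive (\<lambda>t. hom_act rP b (gamma t))"
    using additive.add[OF gamma_additive] by (simp add: additive_def hom_act_def plus_fun_def)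
  show "gamma (lb2 b (tp2 u y)) = hom_act rP b (gamma (tp2 u y))" for u y
    by (simp add: lb2_tp2 gamma_tp2 hom_act_def graded_rmodD(4)[OF P_rmod])
qed

lemma gamma_graded: "gamma ` tensor_grading gB gL tp2 s \<subseteq> BH2 \<inter> hom_deg gP gPL lP la3 s"
  by (rule additive_image_tensor_grading[OF gamma_additive add_closed_Int[OF span_act_add_closed
        hom_deg_add_closed[where gN = gPL and actN = la3, OF tensor_grading_add_closed la3_additive]]])
    (auto simp: gamma_tp2 rP_tp3_BH2 rP_tp3_hom_deg)

lemma gamma_in_BH2: "gamma t \<in> BH2"
  by (rule tensor_additive_mem[OF T2 gamma_additive span_act_add_closed])
    (simp add: gamma_tp2 rP_tp3_BH2)

definition nu_tensor where
  "nu_tensor q = tensor_lift UNIV UNIV tp3 (\<lambda>p l. tp2 (nu q p) l)"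

lemma nu_balanced: "balanced_map UNIV UNIV rP lL (\<lambda>p l. tp2 (nu q p) l)"
  by (simp add: balanced_map_def nu_add_right tp2_add_left tp2_add_right nu_rP tp2_mult)

lemma nu_tensor_additive: "additive (nu_tensor q)"
  unfolding nu_tensor_def by (rule tensor_lift_additive[OF T3 nu_balanced])

lemma nu_tensor_tp3: "nu_tensor q (tp3 p l) = tp2 (nu q p) l"
  unfolding nu_tensor_def by (rule tensor_lift_tp[OF T3 nu_balanced]) simp_all

lemma gamma_nu_tensor: "gamma (nu_tensor q w) m = la3 (mu m q) w"
proof (rule tensor_additive_eqI[OF T3 _ la3_additive, where f = "\<lambda>w. gamma (nu_tensor q w) m"])
  show "additive (\<lambda>w. gamma (nu_tensor q w) m)"
    using additive.add[OF gamma_additive] additive.add[OF nu_tensor_additive]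
    by (simp add: additive_def)
  show "gamma (nu_tensor q (tp3 u y)) m = la3 (mu m q) (tp3 u y)" for u y
    by (simp add: nu_tensor_tp3 gamma_tp2 rP_nu la3_tp3)
qed

lemma hom_act_nu:
  "h \<in> HOM gP gPL lP la3 \<Longrightarrow> hom_act rP (nu q p) h = gamma (nu_tensor q (h p))"
  by (simp add: fun_eq_iff hom_act_def rP_nu gamma_nu_tensor HOM_linear[OF _ la3_additive])

lemma BH2_subset_range_gamma:
  assumes "surjective_traces mu nu"
  shows "BH2 \<subseteq> range gamma"
proof (rule span_act_subset[OF add_closed_range[OF gamma_additive]])
  fix b h assume h: "h \<in> HOM gP gPL lP la3"
  show "hom_act rP b h \<in> range gamma"
  proof (rule nu_induct[OF assms _ add_closed_range[OF gamma_additive],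
        where f = "\<lambda>b. hom_act rP b h"])
    show "additive (\<lambda>b. hom_act rP b h)"
      using additive.add[OF HOM_additive[OF h]]
      by (simp add: additive_def hom_act_def graded_rmodD(2)[OF P_rmod] plus_fun_def)
    show "hom_act rP (nu q p) h \<in> range gamma" for q p
      using hom_act_nu[OF h] by (metis rangeI)
  qed
qed

lemma range_gamma: "surjective_traces mu nu \<Longrightarrow> range gamma = BH2"
  using BH2_subset_range_gamma gamma_in_BH2 by blast

lemma nu_tensor_gamma: "nu_tensor q (gamma t p) = lb2 (nu q p) t"
proof (rule tensor_additive_eqI[OF T2 _ lb2_additive, where f = "\<lambda>t. nu_tensor q (gamma t p)"])
  show "additive (\<lambda>t. nu_tensor q (gamma t p))"
    using additive.add[OF gamma_additive] additive.add[OF nu_tensor_additive]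
    by (simp add: additive_def)
  show "nu_tensor q (gamma (tp2 u y) p) = lb2 (nu q p) (tp2 u y)" for u y
    by (simp add: gamma_tp2 nu_tensor_tp3 nu_rP lb2_tp2)
qed

lemma gamma_kernel:
  assumes "surjective_traces mu nu" "gamma t = 0"
  shows "lb2 b t = 0"
proof -
  have "additive (\<lambda>b. lb2 b t)"
    by (rule tensor_action_additive_scalar[OF T2 lb2_additive, where lact = "(*)"])
      (simp_all add: lb2_tp2 distrib_right)
  moreover have "lb2 (nu q p) t \<in> {0}" for q p
    using nu_tensor_gamma[of q t p] additive.zero[OF nu_tensor_additive] assms(2) by simp
  ultimately have "(\<lambda>b. lb2 b t) b \<in> {0}"
    by (rule nu_induct[OF assms(1) _ add_closed_zero_set])
  then show ?thesis by simp
qed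

end

theorem proposition5p3:
  fixes gA :: "'g::mult_group \<Rightarrow> 'a::ring set" and gB :: "'g \<Rightarrow> 'b::ring set"
    and gP :: "'g \<Rightarrow> 'p::ab_group_add set" and gQ :: "'g \<Rightarrow> 'q::ab_group_add set"
    and lP :: "'a \<Rightarrow> 'p \<Rightarrow> 'p" and rP :: "'p \<Rightarrow> 'b \<Rightarrow> 'p"
    and lQ :: "'b \<Rightarrow> 'q \<Rightarrow> 'q" and rQ :: "'q \<Rightarrow> 'a \<Rightarrow> 'q"
    and mu :: "'p \<Rightarrow> 'q \<Rightarrow> 'a" and nu :: "'q \<Rightarrow> 'p \<Rightarrow> 'b"
    and gK :: "'g \<Rightarrow> 'k::ab_group_add set" and lK :: "'a \<Rightarrow> 'k \<Rightarrow> 'k"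
    and gL :: "'g \<Rightarrow> 'l::ab_group_add set" and lL :: "'b \<Rightarrow> 'l \<Rightarrow> 'l"
    and tp1 :: "'p \<Rightarrow> ('p \<Rightarrow> 'k) \<Rightarrow> 't1::ab_group_add" and la1 :: "'a \<Rightarrow> 't1 \<Rightarrow> 't1"
    and tp2 :: "'b \<Rightarrow> 'l \<Rightarrow> 't2::ab_group_add" and lb2 :: "'b \<Rightarrow> 't2 \<Rightarrow> 't2"
    and tp3 :: "'p \<Rightarrow> 'l \<Rightarrow> 't3::ab_group_add" and la3 :: "'a \<Rightarrow> 't3 \<Rightarrow> 't3"
  defines "BH \<equiv> span_act (hom_act rP) (HOM gP gK lP lK)"
    and "AH \<equiv> span_act (hom_act (\<lambda>x a. x * a)) (HOM gA gK (\<lambda>a x. a * x) lK)"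
    and "BH2 \<equiv> span_act (hom_act rP) (HOM gP (tensor_grading gP gL tp3) lP la3)"
  assumes morita: "graded_morita_context gA gB gP gQ lP rP lQ rQ mu nu"
    and traces: "surjective_traces mu nu"
    and K: "graded_lmod gA gK lK" "lunital lK" "torsion_free lK"
    and L: "graded_lmod gB gL lL" "lunital lL" "torsion_free lL"
    \<comment> \<open>P (x)_B (B . HOM_A(P,K)) with its left A-module structure a(p (x) f) = ap (x) f\<close>
    and T1: "is_tensor UNIV BH rP (hom_act rP) tp1"
      "\<forall>a p. \<forall>f\<in>BH. la1 a (tp1 p f) = tp1 (lP a p) f"
      "\<forall>a s t. la1 a (s + t) = la1 a s + la1 a t"
    \<comment> \<open>B (x)_B L with its left B-module structure b'(b (x) l) = b'b (x) l\<close>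
    and T2: "is_tensor UNIV UNIV (\<lambda>x b. x * b) lL tp2"
      "\<forall>b' b l. lb2 b' (tp2 b l) = tp2 (b' * b) l"
      "\<forall>b s t. lb2 b (s + t) = lb2 b s + lb2 b t"
    \<comment> \<open>P (x)_B L with its left A-module structure a(p (x) l) = ap (x) l\<close>
    and T3: "is_tensor UNIV UNIV rP lL tp3"
      "\<forall>a p l. la3 a (tp3 p l) = tp3 (lP a p) l"
      "\<forall>a s t. la3 a (s + t) = la3 a s + la3 a t"
  shows
    "(\<exists>\<phi> :: 't1 \<Rightarrow> ('a \<Rightarrow> 'k).
        (\<forall>p. \<forall>f\<in>BH. \<forall>x. \<phi> (tp1 p f) x = f (lP x p) \<and> f (lP x p) = lK x (f p)) \<and>
        (\<forall>s t. \<phi> (s + t) = \<phi> s + \<phi> t) \<and>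
        (\<forall>a t. \<phi> (la1 a t) = hom_act (\<lambda>x a. x * a) a (\<phi> t)) \<and>
        (\<forall>s. \<phi> ` tensor_grading gP (\<lambda>b. BH \<inter> hom_deg gP gK lP lK b) tp1 s
               \<subseteq> AH \<inter> hom_deg gA gK (\<lambda>a x. a * x) lK (s * 1)) \<and>
        range \<phi> = AH \<and>
        (\<forall>t. \<phi> t = 0 \<longrightarrow> (\<forall>a. la1 a t = 0)))
     \<and>
     (\<exists>\<gamma> :: 't2 \<Rightarrow> ('p \<Rightarrow> 't3).
        (\<forall>b l. \<gamma> (tp2 b l) = (\<lambda>p. tp3 (rP p b) l)) \<and>
        (\<forall>s t. \<gamma> (s + t) = \<gamma> s + \<gamma> t) \<and>
        (\<forall>b t. \<gamma> (lb2 b t) = hom_act rP b (\<gamma> t)) \<and>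
        (\<forall>s. \<gamma> ` tensor_grading gB gL tp2 s
               \<subseteq> BH2 \<inter> hom_deg gP (tensor_grading gP gL tp3) lP la3 (s * 1)) \<and>
        range \<gamma> = BH2 \<and>
        (\<forall>t. \<gamma> t = 0 \<longrightarrow> (\<forall>b. lb2 b t = 0)))"
proof -
  interpret dual: graded_morita_dual gA gB gP gQ lP rP lQ rQ mu nu gK lK tp1 la1
    using morita K(1) T1 unfolding BH_def
    by unfold_locales (auto simp: graded_morita_def additive_def)
  interpret tens: graded_morita_tensor gA gB gP gQ lP rP lQ rQ mu nu gL lL tp2 lb2 tp3 la3
    using morita L(1) T2 T3 by unfold_locales (auto simp: graded_morita_def additive_def)
  show ?thesis
    unfolding BH_def AH_def BH2_def
    by (intro conjI exI[of _ dual.phi] exI[of _ tens.gamma])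
      (auto simp: dual.phi_tp1 dual.BH_linear additive.add[OF dual.phi_additive] dual.phi_la1
        dual.phi_graded[unfolded image_subset_iff Int_iff] dual.range_phi[OF traces]
        dual.phi_kernel[OF traces] tens.gamma_tp2 additive.add[OF tens.gamma_additive]
        tens.gamma_lb2 tens.gamma_graded[unfolded image_subset_iff Int_iff]
        tens.range_gamma[OF traces] tens.gamma_kernel[OF traces])
qed

end
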